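(* Let the alphabet be countable, $\mathcal S$ the set of sentences, $\widehat{\mathcal I}$ the set of separating interpretations, and $\mu^*:\widehat{\mathcal B}\to\mathbb R$ a (countably additive) probability measure on the Borel $\sigma$-algebra $\widehat{\mathcal B}$ on $\widehat{\mathcal I}$. Define $\mu:\mathcal S\to\mathbb R$ by $\mu(\varphi)=\mu^*(\widehat{\mathrm{Mod}}(\varphi))$. Then $\mu$ is a Gaifman probability on sentences.
   Context: Setting: higher-order logic (Church's simple theory of types, without a description operator), with Henkin semantics: an interpretation $I$ consists of domains $D_\alpha$ ($D_o=\{\mathsf T,\mathsf F\}$, $D_{\alpha\to\beta}$ a set of functions) and a valuation of constants (equality denoting identity) such that every term has a denotation; $V(t,I)$ is the denotation of a closed term $t$. An alphabet is countable if its set of constants is countable. Sentences are closed terms of type $o$; a sentence is valid if true in every interpretation. $I$ is separating if for every pair $r,s$ of closed terms of the same function type $\alpha\to\beta$ with $V(r,I)\neq V(s,I)$ there is a closed term $t$ of type $\alpha$ (over the alphabet) with $V((r\,t),I)\neq V((s\,t),I)$. $\widehat{\mathrm{Mod}}(\varphi)=\{I\in\widehat{\mathcal I}:\varphi\text{ is valid in }I\}$; these sets form a basis of a topology on $\widehat{\mathcal I}$ and $\widehat{\mathcal B}$ is its Borel $\sigma$-algebra (for countable alphabet, the $\sigma$-algebra generated by the sets $\widehat{\mathrm{Mod}}(\varphi)$). A probability on sentences is a non-negative $\mu:\mathcal S\to\mathbb R$ with $\mu(\varphi)=1$ for valid $\varphi$ and $\mu(\varphi\vee\psi)=\mu(\varphi)+\mu(\psi)$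 whenever $\neg(\varphi\wedge\psi)$ is valid. $\mu$ is Gaifman if for every pair $r,s$ of closed terms of the same function type $\alpha\to\beta$, $\mu(r=s)=\inf_{\{t_1,\dots,t_n\}}\mu(\bigwedge_{i=1}^n((r\,t_i)=(s\,t_i)))$ over all finite sets of closed terms of type $\alpha$. *)

theory Defs
  imports "HOL-Probability.Probability"
begin

datatype 'b ty = TBool | TBase 'b | TFun "'b ty" "'b ty"

datatype ('b, 'c) trm =
    Var nat "'b ty"
  | Con 'c
  | Eql "'b ty"
  | Neg
  | Conj
  | Disj
  | App "('b, 'c) trm" "('b, 'c) trm"
  | Lam nat "'b ty" "('b, 'c) trm"

primrec typeof :: "('c \<Rightarrow> 'b ty) \<Rightarrow> ('b, 'c) trm \<Rightarrow> 'b ty option" where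
  "typeof ct (Var x \<tau>) = Some \<tau>"
| "typeof ct (Con c) = Some (ct c)"
| "typeof ct (Eql \<tau>) = Some (TFun \<tau> (TFun \<tau> TBool))"
| "typeof ct Neg = Some (TFun TBool TBool)"
| "typeof ct Conj = Some (TFun TBool (TFun TBool TBool))"
| "typeof ct Disj = Some (TFun TBool (TFun TBool TBool))"
| "typeof ct (App t s) =
     (case typeof ct t of
        Some (TFun \<alpha> \<beta>) \<Rightarrow> (if typeof ct s = Some \<alpha> then Some \<beta> else None)
      | _ \<Rightarrow> None)"
| "typeof ct (Lam x \<alpha> t) = map_option (TFun \<alpha>) (typeof ct t)"

primrec fv :: "('b, 'c) trm \<Rightarrow> (nat \<times> 'b ty) set" where
  "fv (Var x \<tau>) = {(x, \<tau>)}"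
| "fv (Con c) = {}"
| "fv (Eql \<tau>) = {}"
| "fv Neg = {}"
| "fv Conj = {}"
| "fv Disj = {}"
| "fv (App t s) = fv t \<union> fv s"
| "fv (Lam x \<alpha> t) = fv t - {(x, \<alpha>)}"

definition closed_of :: "('c \<Rightarrow> 'b ty) \<Rightarrow> 'b ty \<Rightarrow> ('b, 'c) trm \<Rightarrow> bool" where
  "closed_of ct \<tau> t \<longleftrightarrow> typeof ct t = Some \<tau> \<and> fv t = {}"

definition sentence :: "('c \<Rightarrow> 'b ty) \<Rightarrow> ('b, 'c) trm \<Rightarrow> bool" where
  "sentence ct \<phi> \<longleftrightarrow> closed_of ct TBool \<phi>"

definition mk_eq :: "'b ty \<Rightarrow> ('b, 'c) trm \<Rightarrow> ('b, 'c) trm \<Rightarrow> ('b, 'c) trm" where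
  "mk_eq \<tau> r s = App (App (Eql \<tau>) r) s"

definition mk_neg :: "('b, 'c) trm \<Rightarrow> ('b, 'c) trm" where
  "mk_neg \<phi> = App Neg \<phi>"

definition mk_conj :: "('b, 'c) trm \<Rightarrow> ('b, 'c) trm \<Rightarrow> ('b, 'c) trm" where
  "mk_conj \<phi> \<psi> = App (App Conj \<phi>) \<psi>"

definition mk_disj :: "('b, 'c) trm \<Rightarrow> ('b, 'c) trm \<Rightarrow> ('b, 'c) trm" where
  "mk_disj \<phi> \<psi> = App (App Disj \<phi>) \<psi>"

definition Ttrue :: "('b, 'c) trm" where
  "Ttrue = mk_eq (TFun TBool TBool) (Lam 0 TBool (Var 0 TBool)) (Lam 0 TBool (Var 0 TBool))"

primrec conj_list :: "('b, 'c) trm list \<Rightarrow> ('b, 'c) trm" where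
  "conj_list [] = Ttrue"
| "conj_list (\<phi> # \<phi>s) = mk_conj \<phi> (conj_list \<phi>s)"

text \<open>An interpretation with carrier type 'u: domains D_\<tau> (subsets of 'u), an application
  operation (elements of D_{\<alpha>\<rightarrow>\<beta>} act as functions D_\<alpha> \<rightarrow> D_\<beta>, extensionally), the two
  truth values, and a valuation of the constants.\<close>
record ('b, 'c, 'u) interp =
  Dom :: "'b ty \<Rightarrow> 'u set"
  apl :: "'u \<Rightarrow> 'u \<Rightarrow> 'u"
  tvT :: 'u
  tvF :: 'u
  cval :: "'c \<Rightarrow> 'u"

definition env_ok :: "('b, 'c, 'u) interp \<Rightarrow> (nat \<times> 'b ty \<Rightarrow> 'u) \<Rightarrow> bool" where
  "env_ok I \<rho> \<longleftrightarrow> (\<forall>x \<tau>. \<rho> (x, \<tau>) \<in> Dom I \<tau>)"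

definition eq_den :: "('b, 'c, 'u) interp \<Rightarrow> 'b ty \<Rightarrow> 'u \<Rightarrow> bool" where
  "eq_den I \<tau> e \<longleftrightarrow> e \<in> Dom I (TFun \<tau> (TFun \<tau> TBool)) \<and>
     (\<forall>a\<in>Dom I \<tau>. \<forall>b\<in>Dom I \<tau>. apl I (apl I e a) b = (if a = b then tvT I else tvF I))"

definition neg_den :: "('b, 'c, 'u) interp \<Rightarrow> 'u \<Rightarrow> bool" where
  "neg_den I n \<longleftrightarrow> n \<in> Dom I (TFun TBool TBool) \<and>
     apl I n (tvT I) = tvF I \<and> apl I n (tvF I) = tvT I"

definition conj_den :: "('b, 'c, 'u) interp \<Rightarrow> 'u \<Rightarrow> bool" where
  "conj_den I c \<longleftrightarrow> c \<in> Dom I (TFun TBool (TFun TBool TBool)) \<and>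
     (\<forall>a\<in>Dom I TBool. \<forall>b\<in>Dom I TBool.
        apl I (apl I c a) b = (if a = tvT I \<and> b = tvT I then tvT I else tvF I))"

definition disj_den :: "('b, 'c, 'u) interp \<Rightarrow> 'u \<Rightarrow> bool" where
  "disj_den I c \<longleftrightarrow> c \<in> Dom I (TFun TBool (TFun TBool TBool)) \<and>
     (\<forall>a\<in>Dom I TBool. \<forall>b\<in>Dom I TBool.
        apl I (apl I c a) b = (if a = tvT I \<or> b = tvT I then tvT I else tvF I))"

primrec den :: "('c \<Rightarrow> 'b ty) \<Rightarrow> ('b, 'c, 'u) interp \<Rightarrow> (nat \<times> 'b ty \<Rightarrow> 'u) \<Rightarrow> ('b, 'c) trm \<Rightarrow> 'u" where
  "den ct I \<rho> (Var x \<tau>) = \<rho> (x, \<tau>)"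
| "den ct I \<rho> (Con c) = cval I c"
| "den ct I \<rho> (Eql \<tau>) = (THE e. eq_den I \<tau> e)"
| "den ct I \<rho> Neg = (THE n. neg_den I n)"
| "den ct I \<rho> Conj = (THE c. conj_den I c)"
| "den ct I \<rho> Disj = (THE c. disj_den I c)"
| "den ct I \<rho> (App t s) = apl I (den ct I \<rho> t) (den ct I \<rho> s)"
| "den ct I \<rho> (Lam x \<alpha> t) =
     (case typeof ct t of
        None \<Rightarrow> undefined
      | Some \<beta> \<Rightarrow> (THE f. f \<in> Dom I (TFun \<alpha> \<beta>) \<and>
                     (\<forall>a\<in>Dom I \<alpha>. apl I f a = den ct I (\<rho>((x, \<alpha>) := a)) t)))"

text \<open>Henkin interpretation: a (general, extensional) frame with D_o = {T,F}, constants
  valued in the right domains, and such that every term has a denotation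
  (the logical constants and all lambda-abstractions exist in the frame).\<close>
definition is_interp :: "('c \<Rightarrow> 'b ty) \<Rightarrow> ('b, 'c, 'u) interp \<Rightarrow> bool" where
  "is_interp ct I \<longleftrightarrow>
     (\<forall>\<tau>. Dom I \<tau> \<noteq> {}) \<and>
     Dom I TBool = {tvT I, tvF I} \<and> tvT I \<noteq> tvF I \<and>
     (\<forall>\<alpha> \<beta> f a. f \<in> Dom I (TFun \<alpha> \<beta>) \<longrightarrow> a \<in> Dom I \<alpha> \<longrightarrow> apl I f a \<in> Dom I \<beta>) \<and>
     (\<forall>\<alpha> \<beta> f g. f \<in> Dom I (TFun \<alpha> \<beta>) \<longrightarrow> g \<in> Dom I (TFun \<alpha> \<beta>) \<longrightarrow>
        (\<forall>a\<in>Dom I \<alpha>. apl I f a = apl I g a) \<longrightarrow> f = g) \<and>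
     (\<forall>c. cval I c \<in> Dom I (ct c)) \<and>
     (\<forall>\<tau>. \<exists>e. eq_den I \<tau> e) \<and>
     (\<exists>n. neg_den I n) \<and> (\<exists>c. conj_den I c) \<and> (\<exists>c. disj_den I c) \<and>
     (\<forall>\<rho> x \<alpha> t \<beta>. env_ok I \<rho> \<longrightarrow> typeof ct t = Some \<beta> \<longrightarrow>
        (\<exists>f\<in>Dom I (TFun \<alpha> \<beta>). \<forall>a\<in>Dom I \<alpha>. apl I f a = den ct I (\<rho>((x, \<alpha>) := a)) t))"

text \<open>V(t, I) for closed t (independent of the chosen assignment).\<close>
definition V :: "('c \<Rightarrow> 'b ty) \<Rightarrow> ('b, 'c, 'u) interp \<Rightarrow> ('b, 'c) trm \<Rightarrow> 'u" where
  "V ct I t = den ct I (SOME \<rho>. env_ok I \<rho>) t"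

definition valid_in :: "('c \<Rightarrow> 'b ty) \<Rightarrow> ('b, 'c, 'u) interp \<Rightarrow> ('b, 'c) trm \<Rightarrow> bool" where
  "valid_in ct I \<phi> \<longleftrightarrow> V ct I \<phi> = tvT I"

text \<open>Validity: true in every interpretation (over the carrier type 'u).\<close>
definition valid :: "('c \<Rightarrow> 'b ty) \<Rightarrow> 'u itself \<Rightarrow> ('b, 'c) trm \<Rightarrow> bool" where
  "valid ct U \<phi> \<longleftrightarrow> sentence ct \<phi> \<and>
     (\<forall>I :: ('b, 'c, 'u) interp. is_interp ct I \<longrightarrow> valid_in ct I \<phi>)"

definition separating :: "('c \<Rightarrow> 'b ty) \<Rightarrow> ('b, 'c, 'u) interp \<Rightarrow> bool" where
  "separating ct I \<longleftrightarrow>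
     (\<forall>\<alpha> \<beta> r s. closed_of ct (TFun \<alpha> \<beta>) r \<longrightarrow> closed_of ct (TFun \<alpha> \<beta>) s \<longrightarrow>
        V ct I r \<noteq> V ct I s \<longrightarrow>
        (\<exists>t. closed_of ct \<alpha> t \<and> V ct I (App r t) \<noteq> V ct I (App s t)))"

definition Ihat :: "('c \<Rightarrow> 'b ty) \<Rightarrow> ('b, 'c, 'u) interp set" where
  "Ihat ct = {I. is_interp ct I \<and> separating ct I}"

definition ModH :: "('c \<Rightarrow> 'b ty) \<Rightarrow> ('b, 'c) trm \<Rightarrow> ('b, 'c, 'u) interp set" where
  "ModH ct \<phi> = {I \<in> Ihat ct. valid_in ct I \<phi>}"

text \<open>Open sets of the topology on Ihat with basis the sets ModH \<phi> (\<phi> a sentence),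
  and the Borel sigma-algebra.\<close>
definition opensH :: "('c \<Rightarrow> 'b ty) \<Rightarrow> ('b, 'c, 'u) interp set set" where
  "opensH ct = {U. U \<subseteq> Ihat ct \<and>
     (\<forall>I\<in>U. \<exists>\<phi>. sentence ct \<phi> \<and> I \<in> ModH ct \<phi> \<and> ModH ct \<phi> \<subseteq> U)}"

definition borelH :: "('c \<Rightarrow> 'b ty) \<Rightarrow> ('b, 'c, 'u) interp set set" where
  "borelH ct = sigma_sets (Ihat ct) (opensH ct)"

definition prob_sent :: "('c \<Rightarrow> 'b ty) \<Rightarrow> 'u itself \<Rightarrow> (('b, 'c) trm \<Rightarrow> real) \<Rightarrow> bool" where
  "prob_sent ct U \<mu> \<longleftrightarrow>
     (\<forall>\<phi>. sentence ct \<phi> \<longrightarrow> \<mu> \<phi> \<ge> 0) \<and>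
     (\<forall>\<phi>. valid ct U \<phi> \<longrightarrow> \<mu> \<phi> = 1) \<and>
     (\<forall>\<phi> \<psi>. sentence ct \<phi> \<longrightarrow> sentence ct \<psi> \<longrightarrow> valid ct U (mk_neg (mk_conj \<phi> \<psi>)) \<longrightarrow>
        \<mu> (mk_disj \<phi> \<psi>) = \<mu> \<phi> + \<mu> \<psi>)"

definition gaifman :: "('c \<Rightarrow> 'b ty) \<Rightarrow> 'u itself \<Rightarrow> (('b, 'c) trm \<Rightarrow> real) \<Rightarrow> bool" where
  "gaifman ct U \<mu> \<longleftrightarrow> prob_sent ct U \<mu> \<and>
     (\<forall>\<alpha> \<beta> r s. closed_of ct (TFun \<alpha> \<beta>) r \<longrightarrow> closed_of ct (TFun \<alpha> \<beta>) s \<longrightarrow>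
        \<mu> (mk_eq (TFun \<alpha> \<beta>) r s) =
          (INF ts \<in> {ts. \<forall>t\<in>set ts. closed_of ct \<alpha> t}.
             \<mu> (conj_list (map (\<lambda>t. mk_eq \<beta> (App r t) (App s t)) ts))))"

end

theory Submission
  imports Defs "HOL-Library.Countable"
begin

text \<open>
  A sentence r = s between closed terms of function type holds in a separating interpretation
  exactly when all the instances (r t) = (s t), t closed, hold.  As the alphabet is countable there
  are only countably many such t, so ModH (r = s) is a countable intersection of the measurable sets
  ModH ((r t) = (s t)); continuity from above of the probability measure \<mu>* then turns this
  intersection into the infimum over finite subfamilies, i.e.\ over finite conjunctions.  Finite
  additivity is the elementary fact that ModH commutes with disjunction.
\<close>

lemma is_interp_extensional:
  "is_interp ct I \<Longrightarrow> f \<in> Dom I (TFun \<alpha> \<beta>) \<Longrightarrow> g \<in> Dom I (TFun \<alpha> \<beta>) \<Longrightarrow>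
    (\<And>a. a \<in> Dom I \<alpha> \<Longrightarrow> apl I f a = apl I g a) \<Longrightarrow> f = g"
  unfolding is_interp_def by blast

lemma is_interp_apl_in_Dom:
  "is_interp ct I \<Longrightarrow> f \<in> Dom I (TFun \<alpha> \<beta>) \<Longrightarrow> a \<in> Dom I \<alpha> \<Longrightarrow> apl I f a \<in> Dom I \<beta>"
  unfolding is_interp_def by blast

lemma is_interp_Dom_TBool: "is_interp ct I \<Longrightarrow> Dom I TBool = {tvT I, tvF I}"
  unfolding is_interp_def by blast

lemma is_interp_tvT_neq_tvF: "is_interp ct I \<Longrightarrow> tvT I \<noteq> tvF I"
  unfolding is_interp_def by blast

lemma is_interp_binary_eqI:
  assumes I: "is_interp ct I"
    and e: "e \<in> Dom I (TFun \<alpha> (TFun \<beta> \<gamma>))" and e': "e' \<in> Dom I (TFun \<alpha> (TFun \<beta> \<gamma>))"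
    and eq: "\<And>a b. a \<in> Dom I \<alpha> \<Longrightarrow> b \<in> Dom I \<beta> \<Longrightarrow> apl I (apl I e a) b = apl I (apl I e' a) b"
  shows "e = e'"
proof (rule is_interp_extensional[OF I e e'])
  fix a assume a: "a \<in> Dom I \<alpha>"
  show "apl I e a = apl I e' a"
    by (rule is_interp_extensional[OF I]) (use I e e' a eq in \<open>auto intro: is_interp_apl_in_Dom\<close>)
qed

lemma eq_den_The:
  assumes I: "is_interp ct I" shows "eq_den I \<tau> (THE e. eq_den I \<tau> e)"
proof (rule theI')
  have "e = e'" if "eq_den I \<tau> e" "eq_den I \<tau> e'" for e e'
    by (rule is_interp_binary_eqI[OF I]) (use that in \<open>auto simp: eq_den_def\<close>)
  then show "\<exists>!e. eq_den I \<tau> e" using I unfolding is_interp_def by blast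
qed

lemma neg_den_The:
  assumes I: "is_interp ct I" shows "neg_den I (THE n. neg_den I n)"
proof (rule theI')
  have "n = n'" if "neg_den I n" "neg_den I n'" for n n'
    by (rule is_interp_extensional[OF I])
      (use that is_interp_Dom_TBool[OF I] in \<open>auto simp: neg_den_def\<close>)
  then show "\<exists>!n. neg_den I n" using I unfolding is_interp_def by blast
qed

lemma conj_den_The:
  assumes I: "is_interp ct I" shows "conj_den I (THE c. conj_den I c)"
proof (rule theI')
  have "c = c'" if "conj_den I c" "conj_den I c'" for c c'
    by (rule is_interp_binary_eqI[OF I]) (use that in \<open>auto simp: conj_den_def\<close>)
  then show "\<exists>!c. conj_den I c" using I unfolding is_interp_def by blast
qed

lemma disj_den_The:
  assumes I: "is_interp ct I" shows "disj_den I (THE c. disj_den I c)"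
proof (rule theI')
  have "c = c'" if "disj_den I c" "disj_den I c'" for c c'
    by (rule is_interp_binary_eqI[OF I]) (use that in \<open>auto simp: disj_den_def\<close>)
  then show "\<exists>!c. disj_den I c" using I unfolding is_interp_def by blast
qed

lemma den_in_Dom:
  assumes I: "is_interp ct I"
  shows "env_ok I \<rho> \<Longrightarrow> typeof ct t = Some \<tau> \<Longrightarrow> den ct I \<rho> t \<in> Dom I \<tau>"
proof (induction t arbitrary: \<rho> \<tau>)
  case (Var x \<sigma>)
  then show ?case by (simp add: env_ok_def)
next
  case (Con c)
  then show ?case using I unfolding is_interp_def by auto
next
  case (Eql \<sigma>)
  then show ?case using eq_den_The[OF I, of \<sigma>] by (auto simp: eq_den_def)
next
  case Neg
  then show ?case using neg_den_The[OF I] by (auto simp: neg_den_def)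
next
  case Conj
  then show ?case using conj_den_The[OF I] by (auto simp: conj_den_def)
next
  case Disj
  then show ?case using disj_den_The[OF I] by (auto simp: disj_den_def)
next
  case (App t s)
  then obtain \<alpha> where "typeof ct t = Some (TFun \<alpha> \<tau>)" and "typeof ct s = Some \<alpha>"
    by (auto split: option.splits ty.splits if_splits)
  with App.IH[OF App.prems(1)] show ?case by (simp add: is_interp_apl_in_Dom[OF I])
next
  case (Lam x \<alpha> t)
  then obtain \<beta> where t: "typeof ct t = Some \<beta>" and \<tau>: "\<tau> = TFun \<alpha> \<beta>" by auto
  let ?abs = "\<lambda>f. f \<in> Dom I (TFun \<alpha> \<beta>) \<and> (\<forall>a\<in>Dom I \<alpha>. apl I f a = den ct I (\<rho>((x, \<alpha>) := a)) t)"
  have "\<exists>f. ?abs f" using I Lam.prems(1) t unfolding is_interp_def by blast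
  then have "\<exists>!f. ?abs f" using is_interp_extensional[OF I, of _ \<alpha> \<beta>] by metis
  then have "?abs (THE f. ?abs f)" by (rule theI')
  then show ?case using t \<tau> by simp
qed

lemma V_in_Dom:
  assumes I: "is_interp ct I" and t: "typeof ct t = Some \<tau>"
  shows "V ct I t \<in> Dom I \<tau>"
proof -
  have "env_ok I (\<lambda>(x, \<sigma>). SOME a. a \<in> Dom I \<sigma>)"
    using I by (auto simp: env_ok_def is_interp_def some_in_eq)
  then have "env_ok I (SOME \<rho>. env_ok I \<rho>)" by (rule someI[of "env_ok I"])
  then show ?thesis unfolding V_def using den_in_Dom[OF I _ t] by blast
qed

lemma V_App: "V ct I (App t s) = apl I (V ct I t) (V ct I s)"
  by (simp add: V_def)

lemma V_mk_eq:
  assumes I: "is_interp ct I" and "typeof ct r = Some \<tau>" and "typeof ct s = Some \<tau>"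
  shows "V ct I (mk_eq \<tau> r s) = tvT I \<longleftrightarrow> V ct I r = V ct I s"
proof -
  have "V ct I (Eql \<tau>) = (THE e. eq_den I \<tau> e)" by (simp add: V_def)
  then show ?thesis
    using eq_den_The[OF I, of \<tau>] V_in_Dom[OF I] assms is_interp_tvT_neq_tvF[OF I]
    by (simp add: mk_eq_def V_App eq_den_def)
qed

lemma V_mk_neg:
  assumes I: "is_interp ct I" and "typeof ct \<phi> = Some TBool"
  shows "V ct I (mk_neg \<phi>) = tvT I \<longleftrightarrow> V ct I \<phi> \<noteq> tvT I"
proof -
  have "V ct I Neg = (THE n. neg_den I n)" by (simp add: V_def)
  then show ?thesis
    using neg_den_The[OF I] V_in_Dom[OF I] assms
      is_interp_Dom_TBool[OF I] is_interp_tvT_neq_tvF[OF I]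
    by (auto simp add: mk_neg_def V_App neg_den_def)
qed

lemma V_mk_conj:
  assumes I: "is_interp ct I" and "typeof ct \<phi> = Some TBool" and "typeof ct \<psi> = Some TBool"
  shows "V ct I (mk_conj \<phi> \<psi>) = tvT I \<longleftrightarrow> V ct I \<phi> = tvT I \<and> V ct I \<psi> = tvT I"
proof -
  have "V ct I Conj = (THE c. conj_den I c)" by (simp add: V_def)
  then show ?thesis
    using conj_den_The[OF I] V_in_Dom[OF I] assms is_interp_tvT_neq_tvF[OF I]
    by (simp add: mk_conj_def V_App conj_den_def)
qed

lemma V_mk_disj:
  assumes I: "is_interp ct I" and "typeof ct \<phi> = Some TBool" and "typeof ct \<psi> = Some TBool"
  shows "V ct I (mk_disj \<phi> \<psi>) = tvT I \<longleftrightarrow> V ct I \<phi> = tvT I \<or> V ct I \<psi> = tvT I"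
proof -
  have "V ct I Disj = (THE c. disj_den I c)" by (simp add: V_def)
  then show ?thesis
    using disj_den_The[OF I] V_in_Dom[OF I] assms is_interp_tvT_neq_tvF[OF I]
    by (simp add: mk_disj_def V_App disj_den_def)
qed

lemma typeof_conj_list:
  "\<forall>\<phi>\<in>set \<phi>s. typeof ct \<phi> = Some TBool \<Longrightarrow> typeof ct (conj_list \<phi>s) = Some TBool"
  by (induction \<phi>s) (auto simp: Ttrue_def mk_eq_def mk_conj_def)

lemma V_conj_list:
  assumes I: "is_interp ct I"
  shows "\<forall>\<phi>\<in>set \<phi>s. typeof ct \<phi> = Some TBool \<Longrightarrow>
    V ct I (conj_list \<phi>s) = tvT I \<longleftrightarrow> (\<forall>\<phi>\<in>set \<phi>s. V ct I \<phi> = tvT I)"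
proof (induction \<phi>s)
  case Nil
  then show ?case using V_mk_eq[OF I] by (simp add: Ttrue_def)
next
  case (Cons \<phi> \<phi>s)
  then show ?case using V_mk_conj[OF I] typeof_conj_list[of \<phi>s ct] by simp
qed

lemma typeof_sentence: "sentence ct \<phi> \<Longrightarrow> typeof ct \<phi> = Some TBool"
  by (simp add: sentence_def closed_of_def)

lemma Ihat_is_interp: "I \<in> Ihat ct \<Longrightarrow> is_interp ct I"
  by (simp add: Ihat_def)

lemma separating_V_eq_iff:
  assumes I: "separating ct I"
    and r: "closed_of ct (TFun \<alpha> \<beta>) r" and s: "closed_of ct (TFun \<alpha> \<beta>) s"
  shows "V ct I r = V ct I s \<longleftrightarrow> (\<forall>t. closed_of ct \<alpha> t \<longrightarrow> V ct I (App r t) = V ct I (App s t))"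
  using I r s unfolding separating_def by (metis V_App)

lemma ModH_in_borelH: "sentence ct \<phi> \<Longrightarrow> ModH ct \<phi> \<in> borelH ct"
  unfolding borelH_def by (rule sigma_sets.Basic) (auto simp: opensH_def ModH_def)

lemma ModH_valid: "valid ct TYPE('u) \<phi> \<Longrightarrow> ModH ct \<phi> = (Ihat ct :: ('b, 'c, 'u) interp set)"
  by (auto simp: valid_def ModH_def Ihat_def)

lemma ModH_mk_disj:
  assumes "sentence ct \<phi>" "sentence ct \<psi>"
  shows "ModH ct (mk_disj \<phi> \<psi>) = ModH ct \<phi> \<union> ModH ct \<psi>"
  using V_mk_disj[OF Ihat_is_interp typeof_sentence typeof_sentence] assms
  by (auto simp: ModH_def valid_in_def)

lemma ModH_disjoint:
  assumes \<phi>: "sentence ct \<phi>" and \<psi>: "sentence ct \<psi>"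
    and excl: "valid ct TYPE('u) (mk_neg (mk_conj \<phi> \<psi>))"
  shows "ModH ct \<phi> \<inter> ModH ct \<psi> = ({} :: ('b, 'c, 'u) interp set)"
proof (intro equals0I)
  fix I :: "('b, 'c, 'u) interp" assume "I \<in> ModH ct \<phi> \<inter> ModH ct \<psi>"
  then have I: "is_interp ct I" and "V ct I \<phi> = tvT I" "V ct I \<psi> = tvT I"
    by (auto simp: ModH_def valid_in_def Ihat_is_interp)
  moreover have "V ct I (mk_neg (mk_conj \<phi> \<psi>)) = tvT I"
    using excl I by (simp add: valid_def valid_in_def)
  moreover have "typeof ct (mk_conj \<phi> \<psi>) = Some TBool"
    using \<phi> \<psi> by (simp add: typeof_sentence mk_conj_def)
  ultimately show False
    using V_mk_neg[OF I] V_mk_conj[OF I typeof_sentence[OF \<phi>] typeof_sentence[OF \<psi>]] by simp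
qed

lemma ModH_conj_list:
  assumes "\<forall>\<phi>\<in>set \<phi>s. sentence ct \<phi>"
  shows "ModH ct (conj_list \<phi>s) = Ihat ct \<inter> (\<Inter>\<phi>\<in>set \<phi>s. ModH ct \<phi>)"
proof -
  have "valid_in ct I (conj_list \<phi>s) \<longleftrightarrow> (\<forall>\<phi>\<in>set \<phi>s. valid_in ct I \<phi>)" if "I \<in> Ihat ct" for I
    using V_conj_list[OF Ihat_is_interp[OF that]] assms by (simp add: valid_in_def typeof_sentence)
  then show ?thesis by (auto simp: ModH_def)
qed

lemma ModH_mk_eq_TFun:
  assumes r: "closed_of ct (TFun \<alpha> \<beta>) r" and s: "closed_of ct (TFun \<alpha> \<beta>) s"
  shows "ModH ct (mk_eq (TFun \<alpha> \<beta>) r s) =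
    Ihat ct \<inter> (\<Inter>t\<in>{t. closed_of ct \<alpha> t}. ModH ct (mk_eq \<beta> (App r t) (App s t)))"
proof -
  have "valid_in ct I (mk_eq (TFun \<alpha> \<beta>) r s) \<longleftrightarrow>
      (\<forall>t. closed_of ct \<alpha> t \<longrightarrow> valid_in ct I (mk_eq \<beta> (App r t) (App s t)))"
    if "I \<in> Ihat ct" for I
  proof -
    have I: "is_interp ct I" "separating ct I" using that by (auto simp: Ihat_def)
    have "V ct I (mk_eq \<beta> (App r t) (App s t)) = tvT I \<longleftrightarrow> V ct I (App r t) = V ct I (App s t)"
      if "closed_of ct \<alpha> t" for t
      by (rule V_mk_eq[OF I(1)]) (use that r s in \<open>auto simp: closed_of_def\<close>)
    moreover have "V ct I (mk_eq (TFun \<alpha> \<beta>) r s) = tvT I \<longleftrightarrow> V ct I r = V ct I s"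
      by (rule V_mk_eq[OF I(1)]) (use r s in \<open>auto simp: closed_of_def\<close>)
    ultimately show ?thesis
      using separating_V_eq_iff[OF I(2) r s] by (simp add: valid_in_def)
  qed
  then show ?thesis by (auto simp: ModH_def)
qed

lemma (in finite_measure) measure_INT_eq_INF_finite_subsets:
  assumes T: "countable T" and E: "\<And>t. t \<in> T \<Longrightarrow> E t \<in> sets M"
  shows "measure M (space M \<inter> (\<Inter>t\<in>T. E t)) =
    (INF F\<in>{F. finite F \<and> F \<subseteq> T}. measure M (space M \<inter> (\<Inter>t\<in>F. E t)))"
proof -
  define m where "m F = measure M (space M \<inter> (\<Inter>t\<in>F. E t))" for F
  let ?Fin = "{F. finite F \<and> F \<subseteq> T}"
  have sets: "space M \<inter> (\<Inter>t\<in>F. E t) \<in> sets M" if "countable F" "F \<subseteq> T" for F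
  proof (cases "F = {}")
    case False
    then have "(\<Inter>t\<in>F. E t) \<in> sets M" using that E by (intro sets.countable_INT') auto
    then show ?thesis by auto
  qed simp
  have bdd: "bdd_below (m ` ?Fin)" by (intro bdd_belowI[of _ 0]) (auto simp: m_def)
  have "m T \<le> (INF F\<in>?Fin. m F)"
  proof (rule cINF_greatest)
    show "?Fin \<noteq> {}" by blast
    show "m T \<le> m F" if "F \<in> ?Fin" for F
      unfolding m_def using that sets[of F] by (intro finite_measure_mono) (auto simp: countable_finite)
  qed
  moreover have "(INF F\<in>?Fin. m F) \<le> m T"
  proof (cases "T = {}")
    case True
    then show ?thesis using cINF_lower[OF bdd, of "{}"] by simp
  next
    case False
    define g where "g = from_nat_into T"
    have g: "range g = T" "g n \<in> T" for n
      using False T by (simp_all add: g_def from_nat_into)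
    define B where "B n = space M \<inter> (\<Inter>t\<in>g ` {..<n}. E t)" for n
    have "range B \<subseteq> sets M"
      unfolding B_def using sets g(2) by (blast intro: countable_finite)
    moreover have "decseq B" by (auto simp: B_def decseq_def)
    moreover have "(\<Inter>n. B n) = space M \<inter> (\<Inter>t\<in>T. E t)"
      unfolding B_def g(1)[symmetric] by blast
    ultimately have "(\<lambda>n. measure M (B n)) \<longlonglongrightarrow> m T"
      unfolding m_def by (metis finite_Lim_measure_decseq)
    moreover have "(INF F\<in>?Fin. m F) \<le> measure M (B n)" for n
      unfolding B_def m_def[symmetric] using g(2) by (intro cINF_lower[OF bdd]) auto
    ultimately show ?thesis by (intro LIMSEQ_le_const) auto
  qed
  ultimately show ?thesis by (simp add: m_def)
qed

instance ty :: (countable) countable by countable_datatype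
instance trm :: (countable, countable) countable by countable_datatype

lemma countable_UNIV_trm:
  assumes "countable (UNIV :: 'b set)" "countable (UNIV :: 'c set)"
  shows "countable (UNIV :: ('b, 'c) trm set)"
proof -
  let ?enc = "map_trm (to_nat_on (UNIV :: 'b set)) (to_nat_on (UNIV :: 'c set))"
  have "inj ?enc" by (rule trm.inj_map) (use assms inj_on_to_nat_on in auto)
  moreover have "countable (range ?enc)" by simp
  ultimately show ?thesis by (blast intro: countable_image_inj_on)
qed

lemma prob_sent_measure_ModH:
  fixes M :: "('b, 'c, 'u) interp measure"
  assumes "prob_space M" and "space M = Ihat ct" and "sets M = borelH ct"
  shows "prob_sent ct TYPE('u) (\<lambda>\<phi>. measure M (ModH ct \<phi>))"
proof -
  interpret prob_space M by fact
  have ModH_sets: "ModH ct \<phi> \<in> sets M" if "sentence ct \<phi>" for \<phi>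
    using ModH_in_borelH[OF that] assms(3) by simp
  show ?thesis unfolding prob_sent_def
  proof (intro conjI allI impI)
    fix \<phi> assume "valid ct TYPE('u) \<phi>"
    then show "measure M (ModH ct \<phi>) = 1" using ModH_valid assms(2) prob_space by metis
  next
    fix \<phi> \<psi> assume "sentence ct \<phi>" "sentence ct \<psi>" "valid ct TYPE('u) (mk_neg (mk_conj \<phi> \<psi>))"
    then show "measure M (ModH ct (mk_disj \<phi> \<psi>)) = measure M (ModH ct \<phi>) + measure M (ModH ct \<psi>)"
      by (simp add: ModH_mk_disj ModH_disjoint ModH_sets finite_measure_Union)
  qed simp
qed

lemma measure_ModH_mk_eq_TFun:
  fixes M :: "('b, 'c, 'u) interp measure"
  assumes "countable (UNIV :: 'c set)" and "countable (UNIV :: 'b set)"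
    and "finite_measure M" and "space M = Ihat ct" and "sets M = borelH ct"
    and r: "closed_of ct (TFun \<alpha> \<beta>) r" and s: "closed_of ct (TFun \<alpha> \<beta>) s"
  shows "measure M (ModH ct (mk_eq (TFun \<alpha> \<beta>) r s)) =
    (INF ts\<in>{ts. \<forall>t\<in>set ts. closed_of ct \<alpha> t}.
       measure M (ModH ct (conj_list (map (\<lambda>t. mk_eq \<beta> (App r t) (App s t)) ts))))"
proof -
  interpret finite_measure M by fact
  define T where "T = {t. closed_of ct \<alpha> t}"
  define E :: "('b, 'c) trm \<Rightarrow> ('b, 'c, 'u) interp set"
    where "E t = ModH ct (mk_eq \<beta> (App r t) (App s t))" for t
  have sentence_E: "sentence ct (mk_eq \<beta> (App r t) (App s t))" if "t \<in> T" for t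
    using that r s by (auto simp: T_def closed_of_def sentence_def mk_eq_def)
  have "countable T" using countable_UNIV_trm[OF assms(2,1)] by (rule countable_subset[OF subset_UNIV])
  moreover have "E t \<in> sets M" if "t \<in> T" for t
    using ModH_in_borelH[OF sentence_E[OF that]] assms(5) by (simp add: E_def)
  ultimately have "measure M (ModH ct (mk_eq (TFun \<alpha> \<beta>) r s)) =
      (INF F\<in>{F. finite F \<and> F \<subseteq> T}. measure M (space M \<inter> (\<Inter>t\<in>F. E t)))"
    unfolding ModH_mk_eq_TFun[OF r s] assms(4)[symmetric] T_def[symmetric] E_def[symmetric]
    by (rule measure_INT_eq_INF_finite_subsets)
  also have "{F. finite F \<and> F \<subseteq> T} = set ` {ts. \<forall>t\<in>set ts. t \<in> T}"
    by (auto simp: image_iff dest!: finite_list)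
  also have "(INF F\<in>set ` {ts. \<forall>t\<in>set ts. t \<in> T}. measure M (space M \<inter> (\<Inter>t\<in>F. E t))) =
      (INF ts\<in>{ts. \<forall>t\<in>set ts. t \<in> T}.
         measure M (ModH ct (conj_list (map (\<lambda>t. mk_eq \<beta> (App r t) (App s t)) ts))))"
    unfolding image_image
    by (intro INF_cong refl) (use sentence_E assms(4) in \<open>simp add: ModH_conj_list E_def\<close>)
  finally show ?thesis by (simp add: T_def)
qed

theorem mainTheorem12:
  fixes ct :: "'c \<Rightarrow> 'b ty"
    and M :: "('b, 'c, 'u) interp measure"
  assumes "countable (UNIV :: 'c set)"
    and "countable (UNIV :: 'b set)"
    and "prob_space M"
    and "space M = Ihat ct"
    and "sets M = borelH ct"
  shows "gaifman ct TYPE('u) (\<lambda>\<phi>. measure M (ModH ct \<phi>))"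
proof -
  have "finite_measure M" using assms(3) by (rule prob_space.axioms)
  then show ?thesis
    unfolding gaifman_def
    using prob_sent_measure_ModH[OF assms(3-5)] measure_ModH_mk_eq_TFun[OF assms(1,2) _ assms(4,5)]
    by blast
qed

end
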